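(* Let $\epsilon:B\to A$ (with section $j$) be a local augmentation; regard $A\subset B$ via $j$, let $I=\ker(\epsilon)$, and let $B^\bullet$ denote the group of units of $B$. For a subset $S\subset B\times B$ such that $1+ba\in B^\bullet$ for all $(a,b)\in S$, put $$C(S)=\epsilon^{-1}(1)\cap\langle(1+ab)(1+ba)^{-1}\mid(a,b)\in S\rangle .$$ Then: 1. $C(\{(a,b):\epsilon(a)=0\})=C(\{(a,b):\epsilon(ab)=\epsilon(ba)=0\})=C(\{(a,b):\epsilon(ba)=0\})=C(\{(a,b):1+ba\in B^\bullet\})$. 2. $[B^\bullet,B^\bullet]\cap\epsilon^{-1}(1)=C(\{(a,b):b\in B^\bullet,\ 1+ba\in B^\bullet\})$. 3. $[\epsilon^{-1}(1),\epsilon^{-1}(1)]=C(\{(a,b):\epsilon(a)=0,\ \epsilon(b)=\zeta\})$ for any $\zeta\in A$ which commutes with every element of $I$. In particular, $$[\epsilon^{-1}(1),\epsilon^{-1}(1)]\subset[B^\bullet,B^\bullet]\cap\epsilon^{-1}(1)\subset C:=C(\{(a,b):\epsilon(ab)=\epsilon(ba)=0\}),$$ and $C$ is a normal subgroup of $\epsilon^{-1}(1)$ with abelian quotient.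
   Context: Rings are associative with $1$. An augmentation is a pair of ring homomorphisms $\epsilon:B\to A$, $j:A\to B$ with $\epsilon j=\mathrm{id}_A$; it is a local augmentation if every square matrix $\alpha$ over $B$ with $\epsilon(\alpha)$ invertible is itself invertible. $\langle\cdot\rangle$ denotes the subgroup of $B^\bullet$ generated, and $[G,G]$ the commutator subgroup. (In each listed set $S$ the condition $1+ba\in B^\bullet$ holds automatically by locality, or is imposed.) *)

theory Defs
  imports "HOL-Algebra.Algebra"
begin

definition is_ring_hom :: "('b::ring_1 \<Rightarrow> 'a::ring_1) \<Rightarrow> bool" where
  "is_ring_hom f \<longleftrightarrow> (\<forall>x y. f (x + y) = f x + f y) \<and> (\<forall>x y. f (x * y) = f x * f y) \<and> f 1 = 1"

text \<open>Square n x n matrices over a ring are encoded as functions nat => nat => 'a,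
  only the entries with indices below n matter.\<close>
definition sq_mat_invertible :: "nat \<Rightarrow> (nat \<Rightarrow> nat \<Rightarrow> 'a::ring_1) \<Rightarrow> bool" where
  "sq_mat_invertible n M \<longleftrightarrow> (\<exists>N :: nat \<Rightarrow> nat \<Rightarrow> 'a.
     (\<forall>i<n. \<forall>k<n. (\<Sum>l<n. M i l * N l k) = (if i = k then 1 else 0)) \<and>
     (\<forall>i<n. \<forall>k<n. (\<Sum>l<n. N i l * M l k) = (if i = k then 1 else 0)))"

definition augmentation :: "('b::ring_1 \<Rightarrow> 'a::ring_1) \<Rightarrow> ('a \<Rightarrow> 'b) \<Rightarrow> bool" where
  "augmentation eps j \<longleftrightarrow> is_ring_hom eps \<and> is_ring_hom j \<and> (\<forall>x. eps (j x) = x)"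

definition local_augmentation :: "('b::ring_1 \<Rightarrow> 'a::ring_1) \<Rightarrow> ('a \<Rightarrow> 'b) \<Rightarrow> bool" where
  "local_augmentation eps j \<longleftrightarrow> augmentation eps j \<and>
     (\<forall>n (M :: nat \<Rightarrow> nat \<Rightarrow> 'b). sq_mat_invertible n (\<lambda>i k. eps (M i k)) \<longrightarrow> sq_mat_invertible n M)"

definition mult_monoid :: "'b::ring_1 monoid" where
  "mult_monoid = \<lparr>carrier = UNIV, monoid.mult = (*), one = 1\<rparr>"

definition units_grp :: "'b::ring_1 monoid" where
  "units_grp = units_of mult_monoid"

definition C_set :: "('b::ring_1 \<Rightarrow> 'a::ring_1) \<Rightarrow> ('b \<times> 'b) set \<Rightarrow> 'b set" where
  "C_set eps S = {x. eps x = 1} \<inter>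
     generate units_grp {(1 + a * b) \<otimes>\<^bsub>units_grp\<^esub> inv\<^bsub>units_grp\<^esub> (1 + b * a) | a b. (a, b) \<in> S}"

end

theory Submission
  imports Defs
begin

(* Write <a, b> = (1 + ab)(1 + ba)^-1.  Locality of the augmentation, already for 1 x 1
   matrices, makes an element of B a unit as soon as its image under eps is one.  Let N be
   the subgroup generated by the <a, b> with eps a = 0; it is normal in the units of B and
   lies in eps^-1(1).  The identity
     <x + (1 + xy) c, y> = (1 + xy) <c, y> (1 + xy)^-1 <x, y>
   shows that <a, b> is congruent modulo N to <j eps a, j eps b> = j eps <a, b>.  Hence every
   u in the subgroup generated by all <a, b> with 1 + ba a unit satisfies u = j (eps u)
   modulo N, and if moreover eps u = 1 then u lies in N; this gives the equalities in 1.
   Part 2 rests on [u, v] = <u (v - 1), u^-1> and <a, b> = [b^-1, 1 + ba]; the first of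
   these also shows that eps^-1(1) / N is abelian.  For part 3: when x commutes with y, the
   same identity says that <x + (1 + xy) c, y> is conjugate to <c, y> by an element of
   eps^-1(1).  This moves the first entry of <b, a> between the fibres of eps over 1 and
   over zeta, and so relates the commutators of eps^-1(1) to the generators of C(S) with
   eps b = zeta. *)

section \<open>Equalizers and abelian quotients of groups\<close>

lemma (in group) subgroup_equalizer:
  assumes "group H" "f \<in> hom G H" "g \<in> hom G H"
  shows "subgroup {x \<in> carrier G. f x = g x} G"
proof -
  interpret f: group_hom G H f using assms by (simp add: group_hom_def group_hom_axioms_def)
  interpret g: group_hom G H g using assms by (simp add: group_hom_def group_hom_axioms_def)
  show ?thesis
    by (rule subgroupI) auto
qed

lemma (in group) comm_group_Mod_if_commutators_in:
  assumes N: "N \<lhd> G"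
    and comm: "\<And>x y. x \<in> carrier G \<Longrightarrow> y \<in> carrier G \<Longrightarrow> x \<otimes> y \<otimes> inv x \<otimes> inv y \<in> N"
  shows "comm_group (G Mod N)"
proof (rule group.group_comm_groupI[OF normal.factorgroup_is_group[OF N]])
  interpret N: normal N G by (rule N)
  fix A B assume "A \<in> carrier (G Mod N)" "B \<in> carrier (G Mod N)"
  then obtain x y where x: "x \<in> carrier G" "A = N #> x" and y: "y \<in> carrier G" "B = N #> y"
    unfolding FactGroup_def RCOSETS_def by auto
  have "y \<otimes> x \<otimes> inv (x \<otimes> y) = y \<otimes> x \<otimes> inv y \<otimes> inv x"
    using x y by (simp add: inv_mult_group m_assoc)
  then have "y \<otimes> x \<in> N #> (x \<otimes> y)"
    using N.rcos_module[OF is_group] x y comm by simp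
  then have "N #> (x \<otimes> y) = N #> (y \<otimes> x)"
    using repr_independence N.subgroup_axioms x y by simp
  then show "A \<otimes>\<^bsub>G Mod N\<^esub> B = B \<otimes>\<^bsub>G Mod N\<^esub> A"
    using x y by (simp add: FactGroup_def N.rcos_sum)
qed

section \<open>The unit group of a ring\<close>

abbreviation ring_units :: "'b::ring_1 set" where
  "ring_units \<equiv> carrier units_grp"

abbreviation unit_inv :: "'b::ring_1 \<Rightarrow> 'b" where
  "unit_inv x \<equiv> inv\<^bsub>units_grp\<^esub> x"

lemma group_units_grp: "group (units_grp :: 'b::ring_1 monoid)"
proof -
  have "monoid (mult_monoid :: 'b monoid)"
    by unfold_locales (auto simp: mult_monoid_def mult.assoc)
  then show ?thesis
    unfolding units_grp_def by (rule monoid.units_group)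
qed

interpretation units_grp: group "units_grp :: 'b::ring_1 monoid"
  by (rule group_units_grp)

lemma ring_units_iff: "x \<in> ring_units \<longleftrightarrow> (\<exists>y. x * y = 1 \<and> y * x = 1)"
  by (auto simp: units_grp_def units_of_carrier Units_def mult_monoid_def)

lemma units_grp_mult [simp]: "x \<otimes>\<^bsub>units_grp\<^esub> y = x * y"
  by (simp add: units_grp_def units_of_mult mult_monoid_def)

lemma units_grp_one [simp]: "\<one>\<^bsub>units_grp\<^esub> = 1"
  by (simp add: units_grp_def units_of_one mult_monoid_def)

lemma ring_unitsI: "x * y = 1 \<Longrightarrow> y * x = 1 \<Longrightarrow> x \<in> ring_units"
  by (auto simp: ring_units_iff)

lemma one_in_ring_units [simp]: "1 \<in> ring_units"
  using units_grp.one_closed by simp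

lemma ring_units_mult: "x \<in> ring_units \<Longrightarrow> y \<in> ring_units \<Longrightarrow> x * y \<in> ring_units"
  using units_grp.m_closed by simp

lemma unit_inv_right [simp]: "x \<in> ring_units \<Longrightarrow> x * unit_inv x = 1"
  using units_grp.r_inv by simp

lemma unit_inv_left [simp]: "x \<in> ring_units \<Longrightarrow> unit_inv x * x = 1"
  using units_grp.l_inv by simp

lemma unit_inv_cancel [simp]:
  assumes "x \<in> ring_units"
  shows "x * (unit_inv x * y) = y" "unit_inv x * (x * y) = y"
    "y * x * unit_inv x = y" "y * unit_inv x * x = y"
  using assms by (simp_all flip: mult.assoc) (simp_all add: mult.assoc)

lemma unit_inv_unique: "x * y = 1 \<Longrightarrow> y * x = 1 \<Longrightarrow> unit_inv x = y"
  using units_grp.inv_equality[of y x] by (simp add: ring_unitsI)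

lemma unit_inv_one [simp]: "unit_inv 1 = 1"
  by (rule unit_inv_unique) simp_all

lemma unit_inv_mult:
  "x \<in> ring_units \<Longrightarrow> y \<in> ring_units \<Longrightarrow> unit_inv (x * y) = unit_inv y * unit_inv x"
  using units_grp.inv_mult_group by simp

lemma one_plus_mult_unit_swap:
  fixes a b :: "'b::ring_1"
  assumes "1 + b * a \<in> ring_units"
  shows "1 + a * b \<in> ring_units"
proof (rule ring_unitsI)
  let ?v = "unit_inv (1 + b * a)"
  have "(1 + a * b) * (1 - a * ?v * b) = 1 + a * b - a * ((1 + b * a) * ?v) * b"
    by (simp add: algebra_simps)
  then show "(1 + a * b) * (1 - a * ?v * b) = 1" using assms by simp
  have "(1 - a * ?v * b) * (1 + a * b) = 1 + a * b - a * (?v * (1 + b * a)) * b"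
    by (simp add: algebra_simps)
  then show "(1 - a * ?v * b) * (1 + a * b) = 1" using assms by simp
qed

section \<open>Dennis--Stein elements\<close>

text \<open>(1 + ab)(1 + ba)^-1 is the image in K_1 of the Dennis--Stein symbol <a, b>.\<close>
definition dennis_stein :: "'b::ring_1 \<Rightarrow> 'b \<Rightarrow> 'b" where
  "dennis_stein a b = (1 + a * b) * unit_inv (1 + b * a)"

lemma dennis_stein_unit: "1 + b * a \<in> ring_units \<Longrightarrow> dennis_stein a b \<in> ring_units"
  unfolding dennis_stein_def by (simp add: one_plus_mult_unit_swap ring_units_mult)

lemma unit_inv_dennis_stein:
  "1 + b * a \<in> ring_units \<Longrightarrow> unit_inv (dennis_stein a b) = dennis_stein b a"
  unfolding dennis_stein_def by (simp add: unit_inv_mult one_plus_mult_unit_swap)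

lemma dennis_stein_commuting: "a * b = b * a \<Longrightarrow> 1 + b * a \<in> ring_units \<Longrightarrow> dennis_stein a b = 1"
  unfolding dennis_stein_def by simp

lemma dennis_stein_conj:
  assumes u: "u \<in> ring_units" and ab: "1 + b * a \<in> ring_units"
  shows "u * dennis_stein a b * unit_inv u
    = dennis_stein (u * a * unit_inv u) (u * b * unit_inv u)"
proof -
  have conj: "1 + (u * x * unit_inv u) * (u * y * unit_inv u) = u * (1 + x * y) * unit_inv u"
    for x y using u by (simp add: algebra_simps mult.assoc)
  have "unit_inv (u * (1 + b * a) * unit_inv u) = u * unit_inv (1 + b * a) * unit_inv u"
    using u ab by (simp add: unit_inv_mult ring_units_mult mult.assoc)
  then show ?thesis
    unfolding dennis_stein_def conj using u by (simp add: mult.assoc)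
qed

lemma dennis_stein_add_left:
  assumes "1 + y * x \<in> ring_units" "1 + y * c \<in> ring_units"
  shows "dennis_stein (x + (1 + x * y) * c) y
    = (1 + x * y) * dennis_stein c y * unit_inv (1 + x * y) * dennis_stein x y"
proof -
  have "1 + (x + (1 + x * y) * c) * y = (1 + x * y) * (1 + c * y)"
    "1 + y * (x + (1 + x * y) * c) = (1 + y * x) * (1 + y * c)"
    by (simp_all add: algebra_simps)
  then show ?thesis
    unfolding dennis_stein_def using assms
    by (simp add: unit_inv_mult one_plus_mult_unit_swap mult.assoc)
qed

lemma dennis_stein_add_left_commuting:
  assumes "x * y = y * x" "1 + y * x \<in> ring_units" "1 + y * c \<in> ring_units"
  shows "dennis_stein (x + (1 + x * y) * c) y
    = (1 + x * y) * dennis_stein c y * unit_inv (1 + x * y)"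
  using dennis_stein_add_left[OF assms(2,3)] dennis_stein_commuting[OF assms(1,2)] by simp

lemma commutator_eq_dennis_stein:
  assumes "u \<in> ring_units" "v \<in> ring_units"
  shows "u * v * unit_inv u * unit_inv v = dennis_stein (u * (v - 1)) (unit_inv u)"
proof -
  have "1 + u * (v - 1) * unit_inv u = u * v * unit_inv u" "1 + unit_inv u * (u * (v - 1)) = v"
    using assms by (simp_all add: algebra_simps)
  then show ?thesis unfolding dennis_stein_def by simp
qed

text \<open>The double inverse keeps the right-hand side literally of the shape
  x y x^-1 y^-1 used by \<^const>\<open>derived\<close>.\<close>
lemma dennis_stein_eq_commutator:
  assumes "b \<in> ring_units" "1 + b * a \<in> ring_units"
  shows "dennis_stein a b = unit_inv b * (1 + b * a) * unit_inv (unit_inv b) * unit_inv (1 + b * a)"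
proof -
  have "unit_inv b * (1 + b * a) * b = 1 + a * b" using assms by (simp add: algebra_simps)
  then show ?thesis unfolding dennis_stein_def using assms by simp
qed

lemma is_ring_hom_zero: "is_ring_hom f \<Longrightarrow> f 0 = 0"
  unfolding is_ring_hom_def by (metis add_cancel_right_right add_0)

lemma is_ring_hom_diff: "is_ring_hom f \<Longrightarrow> f (x - y) = f x - f y"
  unfolding is_ring_hom_def by (metis add_diff_cancel diff_add_cancel)

lemma is_ring_hom_units:
  assumes "is_ring_hom f"
  shows "f \<in> hom units_grp units_grp"
proof -
  have mult: "f (x * y) = f x * f y" and one: "f 1 = 1" for x y
    using assms unfolding is_ring_hom_def by auto
  have "f x \<in> ring_units" if "x \<in> ring_units" for x
  proof -
    obtain y where "x * y = 1" "y * x = 1" using \<open>x \<in> ring_units\<close> ring_units_iff by blast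
    then show ?thesis using ring_unitsI[of "f x" "f y"] by (simp flip: mult add: one)
  qed
  then show ?thesis by (simp add: hom_def mult)
qed

lemma is_ring_hom_unit_inv:
  assumes "is_ring_hom f" "x \<in> ring_units"
  shows "f (unit_inv x) = unit_inv (f x)"
proof -
  interpret group_hom units_grp units_grp f
    using is_ring_hom_units[OF assms(1)] by unfold_locales
  show ?thesis using assms(2) by simp
qed

lemma is_ring_hom_dennis_stein:
  assumes "is_ring_hom f" "1 + b * a \<in> ring_units"
  shows "f (dennis_stein a b) = dennis_stein (f a) (f b)"
proof -
  have add: "f (x + y) = f x + f y" and mult: "f (x * y) = f x * f y" and one: "f 1 = 1" for x y
    using assms(1) unfolding is_ring_hom_def by auto
  show ?thesis
    unfolding dennis_stein_def mult is_ring_hom_unit_inv[OF assms] by (simp only: add mult one)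
qed

definition dennis_stein_subgroup :: "('b::ring_1 \<times> 'b) set \<Rightarrow> 'b set" where
  "dennis_stein_subgroup S = generate units_grp {dennis_stein a b | a b. (a, b) \<in> S}"

lemma C_set_eq_Int_dennis_stein_subgroup: "C_set eps S = {x. eps x = 1} \<inter> dennis_stein_subgroup S"
  unfolding C_set_def dennis_stein_subgroup_def dennis_stein_def by simp

lemma dennis_stein_generators_units:
  "(\<And>a b. (a, b) \<in> S \<Longrightarrow> 1 + b * a \<in> ring_units)
    \<Longrightarrow> {dennis_stein a b | a b. (a, b) \<in> S} \<subseteq> ring_units"
  using dennis_stein_unit by blast

lemma subgroup_dennis_stein_subgroup:
  "(\<And>a b. (a, b) \<in> S \<Longrightarrow> 1 + b * a \<in> ring_units)
    \<Longrightarrow> subgroup (dennis_stein_subgroup S) units_grp"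
  unfolding dennis_stein_subgroup_def
  by (rule units_grp.generate_is_subgroup[OF dennis_stein_generators_units])

lemma dennis_stein_in_subgroup: "(a, b) \<in> S \<Longrightarrow> dennis_stein a b \<in> dennis_stein_subgroup S"
  unfolding dennis_stein_subgroup_def by (rule generate.incl) blast

lemma dennis_stein_subgroup_mono: "S \<subseteq> S' \<Longrightarrow> dennis_stein_subgroup S \<subseteq> dennis_stein_subgroup S'"
  unfolding dennis_stein_subgroup_def by (rule units_grp.mono_generate) blast

lemma derived_units_grp:
  "derived units_grp (ring_units :: 'b::ring_1 set)
    = dennis_stein_subgroup {(a, b). b \<in> ring_units \<and> 1 + b * a \<in> ring_units}"
proof -
  let ?S = "{(a, b). b \<in> ring_units \<and> 1 + b * a \<in> (ring_units :: 'b set)}"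
  have "derived_set units_grp ring_units = {dennis_stein a b | a b. (a, b) \<in> ?S}"
  proof (intro equalityI subsetI)
    fix x :: 'b assume "x \<in> derived_set units_grp ring_units"
    then obtain u v where u: "u \<in> ring_units" and v: "v \<in> ring_units"
      and x: "x = u * v * unit_inv u * unit_inv v"
      by auto
    have "1 + unit_inv u * (u * (v - 1)) = v" using u by (simp add: algebra_simps)
    then have "(u * (v - 1), unit_inv u) \<in> ?S" using u v by simp
    then show "x \<in> {dennis_stein a b | a b. (a, b) \<in> ?S}"
      unfolding x commutator_eq_dennis_stein[OF u v] by blast
  next
    fix x :: 'b assume "x \<in> {dennis_stein a b | a b. (a, b) \<in> ?S}"
    then obtain a b where b: "b \<in> ring_units" and ba: "1 + b * a \<in> ring_units"
      and x: "x = dennis_stein a b"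
      by auto
    have "unit_inv b * (1 + b * a) * unit_inv (unit_inv b) * unit_inv (1 + b * a)
        \<in> derived_set units_grp ring_units"
      using b ba by (intro UN_I[of "unit_inv b"] UN_I[of "1 + b * a"]) simp_all
    then show "x \<in> derived_set units_grp ring_units"
      unfolding x dennis_stein_eq_commutator[OF b ba] .
  qed
  then show ?thesis
    unfolding derived_def dennis_stein_subgroup_def by (rule arg_cong)
qed

lemma derived_units_grp_Int_C_set:
  "derived units_grp ring_units \<inter> {x. eps x = 1}
    = C_set eps {(a, b). b \<in> ring_units \<and> 1 + b * a \<in> ring_units}"
  unfolding C_set_eq_Int_dennis_stein_subgroup derived_units_grp by blast

section \<open>Local augmentations\<close>

locale local_aug =
  fixes eps :: "'b::ring_1 \<Rightarrow> 'a::ring_1" and j :: "'a \<Rightarrow> 'b"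
  assumes local_augmentation: "local_augmentation eps j"
begin

lemma is_ring_hom_eps: "is_ring_hom eps"
  and is_ring_hom_j: "is_ring_hom j"
  and eps_j [simp]: "eps (j x) = x"
  and j_one [simp]: "j 1 = 1"
  using local_augmentation unfolding local_augmentation_def augmentation_def is_ring_hom_def
  by auto

lemma eps_add [simp]: "eps (x + y) = eps x + eps y"
  and eps_mult [simp]: "eps (x * y) = eps x * eps y"
  and eps_one [simp]: "eps 1 = 1"
  and eps_zero [simp]: "eps 0 = 0"
  and eps_diff [simp]: "eps (x - y) = eps x - eps y"
  using is_ring_hom_eps is_ring_hom_zero is_ring_hom_diff unfolding is_ring_hom_def by auto

lemma unit_lift:
  assumes "eps x \<in> ring_units"
  shows "x \<in> ring_units"
proof -
  obtain y where y: "eps x * y = 1" "y * eps x = 1"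
    using assms ring_units_iff by blast
  have "sq_mat_invertible 1 (\<lambda>i k. eps x)"
    unfolding sq_mat_invertible_def by (rule exI[of _ "\<lambda>_ _. y"]) (simp add: y)
  then have "sq_mat_invertible 1 (\<lambda>i k. x)"
    using local_augmentation unfolding local_augmentation_def by (auto dest: spec[of _ 1])
  then obtain z where "x * z = 1" "z * x = 1"
    unfolding sq_mat_invertible_def by auto
  then show ?thesis by (rule ring_unitsI)
qed

lemma eps_unit: "x \<in> ring_units \<Longrightarrow> eps x \<in> ring_units"
  using is_ring_hom_units[OF is_ring_hom_eps] by (auto simp: hom_def)

lemma eps_one_unit: "eps x = 1 \<Longrightarrow> x \<in> ring_units"
  by (rule unit_lift) simp

lemma eps_unit_inv: "x \<in> ring_units \<Longrightarrow> eps (unit_inv x) = unit_inv (eps x)"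
  by (rule is_ring_hom_unit_inv[OF is_ring_hom_eps])

lemma eps_unit_inv_eq_one [simp]: "eps u = 1 \<Longrightarrow> eps (unit_inv u) = 1"
  by (simp add: eps_unit_inv eps_one_unit)

lemma one_plus_kernel_unit: "eps x = 0 \<Longrightarrow> 1 + x \<in> ring_units"
  by (rule eps_one_unit) simp

abbreviation E1 :: "'b set" where
  "E1 \<equiv> {x. eps x = 1}"

abbreviation E1_grp :: "'b monoid" where
  "E1_grp \<equiv> units_grp\<lparr>carrier := E1\<rparr>"

lemma E1_normal: "E1 \<lhd> units_grp"
proof -
  interpret group_hom units_grp units_grp eps
    using is_ring_hom_units[OF is_ring_hom_eps] by unfold_locales
  have "kernel units_grp units_grp eps = E1"
    unfolding kernel_def using eps_one_unit by auto
  then show ?thesis using normal_kernel by simp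
qed

lemma subgroup_E1: "subgroup E1 units_grp"
  using E1_normal by (rule normal_imp_subgroup)

lemma group_E1_grp: "group E1_grp"
  using subgroup_E1 by (rule units_grp.subgroup_imp_group)

lemma inv_E1_grp [simp]: "eps u = 1 \<Longrightarrow> inv\<^bsub>E1_grp\<^esub> u = unit_inv u"
  using units_grp.m_inv_consistent[OF subgroup_E1] by simp

lemma normal_E1_grp_conj:
  "H \<lhd> E1_grp \<Longrightarrow> eps u = 1 \<Longrightarrow> x \<in> H \<Longrightarrow> u * x * unit_inv u \<in> H"
  using normal.inv_op_closed2[of H E1_grp u x] by simp

lemma normal_E1_grp_unit_inv: "H \<lhd> E1_grp \<Longrightarrow> x \<in> H \<Longrightarrow> unit_inv x \<in> H"
  using subgroup.m_inv_closed[OF normal_imp_subgroup, of H E1_grp x]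
    subgroup.subset[OF normal_imp_subgroup, of H E1_grp] by auto

abbreviation N :: "'b set" where
  "N \<equiv> dennis_stein_subgroup {(a, b). eps a = 0}"

lemma eps_dennis_stein_of_kernel [simp]: "eps a = 0 \<Longrightarrow> eps (dennis_stein a b) = 1"
  using is_ring_hom_dennis_stein[OF is_ring_hom_eps, of b a] one_plus_kernel_unit[of "b * a"]
  by (simp add: dennis_stein_def)

lemma dennis_stein_in_N: "eps a = 0 \<Longrightarrow> dennis_stein a b \<in> N"
  by (rule dennis_stein_in_subgroup) simp

lemma N_normal: "N \<lhd> units_grp"
  unfolding dennis_stein_subgroup_def
proof (rule units_grp.normal_generateI)
  show "{dennis_stein a b |a b. (a, b) \<in> {(a, b). eps a = 0}} \<subseteq> ring_units"
    by (rule dennis_stein_generators_units) (simp add: one_plus_kernel_unit)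
next
  fix h u :: 'b assume "h \<in> {dennis_stein a b |a b. (a, b) \<in> {(a, b). eps a = 0}}" "u \<in> ring_units"
  then obtain a b where "eps a = 0" "h = dennis_stein a b" "u \<in> ring_units"
    by auto
  then show "u \<otimes>\<^bsub>units_grp\<^esub> h \<otimes>\<^bsub>units_grp\<^esub> inv\<^bsub>units_grp\<^esub> u
      \<in> {dennis_stein a b |a b. (a, b) \<in> {(a, b). eps a = 0}}"
    using dennis_stein_conj[of u b a] one_plus_kernel_unit[of "b * a"] by auto
qed

lemma N_subset_E1: "N \<subseteq> E1"
  unfolding dennis_stein_subgroup_def
  by (rule units_grp.generate_subgroup_incl[OF _ subgroup_E1]) auto

abbreviation N_coset :: "'b \<Rightarrow> 'b set" where
  "N_coset \<equiv> r_coset units_grp N"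

lemma N_coset_group_hom: "group_hom units_grp (units_grp Mod N) N_coset"
  using N_normal
  by (simp add: group_hom_def group_hom_axioms_def normal.factorgroup_is_group
      normal.r_coset_hom_Mod)

lemma N_coset_mult_N: "h \<in> N \<Longrightarrow> x \<in> ring_units \<Longrightarrow> N_coset (h * x) = N_coset x"
  using units_grp.coset_mult_assoc[of N h x] subgroup.rcos_const[of N units_grp h]
    normal_imp_subgroup[OF N_normal] subgroup.subset[OF normal_imp_subgroup[OF N_normal]]
  by auto

lemma N_coset_dennis_stein_left:
  assumes aa': "eps a = eps a'" and ba': "1 + b * a' \<in> ring_units"
  shows "N_coset (dennis_stein a b) = N_coset (dennis_stein a' b)"
proof -
  let ?u = "1 + a' * b"
  define c where "c = unit_inv ?u * (a - a')"
  have u: "?u \<in> ring_units" using ba' by (rule one_plus_mult_unit_swap)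
  have "eps c = 0" using aa' by (simp add: c_def)
  then have bc: "1 + b * c \<in> ring_units" by (simp add: one_plus_kernel_unit)
  have "a = a' + ?u * c" using u by (simp add: c_def)
  then have "dennis_stein a b = (?u * dennis_stein c b * unit_inv ?u) * dennis_stein a' b"
    using dennis_stein_add_left[OF ba' bc] by simp
  moreover have "?u * dennis_stein c b * unit_inv ?u \<in> N"
    using normal.inv_op_closed2[OF N_normal u dennis_stein_in_N[OF \<open>eps c = 0\<close>]] by simp
  ultimately show ?thesis
    using N_coset_mult_N dennis_stein_unit[OF ba'] by simp
qed

lemma N_coset_dennis_stein_eq_eps:
  assumes ba: "1 + b * a \<in> ring_units"
  shows "N_coset (dennis_stein a b) = N_coset (j (eps (dennis_stein a b)))"
proof -
  interpret \<pi>: group_hom units_grp "units_grp Mod N" N_coset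
    by (rule N_coset_group_hom)
  define a0 b0 where "a0 = j (eps a)" and "b0 = j (eps b)"
  have eps_ba: "eps (1 + b * a) \<in> ring_units"
    using ba by (rule eps_unit)
  have ba0: "1 + b * a0 \<in> ring_units" and b0a0: "1 + b0 * a0 \<in> ring_units"
    using eps_ba by (auto simp: a0_def b0_def intro: unit_lift)
  have j_eps: "j (eps (dennis_stein a b)) = dennis_stein a0 b0"
    using is_ring_hom_dennis_stein[OF is_ring_hom_eps ba]
      is_ring_hom_dennis_stein[OF is_ring_hom_j, of "eps b" "eps a"] eps_ba
    by (simp add: a0_def b0_def)
  have "N_coset (dennis_stein a b) = N_coset (dennis_stein a0 b)"
    using ba0 by (intro N_coset_dennis_stein_left) (simp add: a0_def)
  also have "\<dots> = N_coset (unit_inv (dennis_stein b a0))"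
    using one_plus_mult_unit_swap[OF ba0] by (simp add: unit_inv_dennis_stein)
  also have "\<dots> = inv\<^bsub>units_grp Mod N\<^esub> N_coset (dennis_stein b a0)"
    using one_plus_mult_unit_swap[OF ba0] by (simp add: dennis_stein_unit)
  also have "\<dots> = inv\<^bsub>units_grp Mod N\<^esub> N_coset (dennis_stein b0 a0)"
    using one_plus_mult_unit_swap[OF b0a0]
    by (subst N_coset_dennis_stein_left) (simp_all add: b0_def)
  also have "\<dots> = N_coset (dennis_stein a0 b0)"
    using one_plus_mult_unit_swap[OF b0a0] b0a0
    by (simp add: dennis_stein_unit unit_inv_dennis_stein flip: \<pi>.hom_inv)
  finally show ?thesis by (simp add: j_eps)
qed

lemma Int_E1_subset_N:
  "E1 \<inter> dennis_stein_subgroup {(a, b). 1 + b * a \<in> ring_units} \<subseteq> N"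
proof -
  let ?M = "{u \<in> ring_units. N_coset u = (N_coset \<circ> j \<circ> eps) u}"
  interpret \<pi>: group_hom units_grp "units_grp Mod N" N_coset
    by (rule N_coset_group_hom)
  have "N_coset \<circ> j \<circ> eps \<in> hom units_grp (units_grp Mod N)"
    using hom_compose[OF hom_compose[OF is_ring_hom_units[OF is_ring_hom_eps]
          is_ring_hom_units[OF is_ring_hom_j]] \<pi>.homh] by (simp add: o_assoc)
  then have "subgroup ?M units_grp"
    by (rule units_grp.subgroup_equalizer[OF \<pi>.H.is_group \<pi>.homh])
  moreover have "dennis_stein a b \<in> ?M" if "1 + b * a \<in> ring_units" for a b
    using that by (simp add: dennis_stein_unit N_coset_dennis_stein_eq_eps[OF that])
  ultimately have "dennis_stein_subgroup {(a, b). 1 + b * a \<in> ring_units} \<subseteq> ?M"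
    unfolding dennis_stein_subgroup_def[of "{(a, b). 1 + b * a \<in> ring_units}"]
    by (intro units_grp.generate_subgroup_incl) blast+
  moreover have "u \<in> N" if "u \<in> ?M" "eps u = 1" for u
  proof -
    have "N_coset u = N"
      using that units_grp.coset_mult_one[OF subgroup.subset[OF normal_imp_subgroup[OF N_normal]]]
      by simp
    then show ?thesis
      using units_grp.rcos_self[OF _ normal_imp_subgroup[OF N_normal]] that by blast
  qed
  ultimately show ?thesis by blast
qed

lemma C_set_eq_N:
  assumes "{(a, b). eps a = 0} \<subseteq> S" and "S \<subseteq> {(a, b). 1 + b * a \<in> ring_units}"
  shows "C_set eps S = N"
  using dennis_stein_subgroup_mono[OF assms(1)] dennis_stein_subgroup_mono[OF assms(2)]
    Int_E1_subset_N N_subset_E1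
  unfolding C_set_eq_Int_dennis_stein_subgroup by blast

lemma dennis_stein_fibre_transfer:
  assumes H: "H \<lhd> E1_grp"
    and z: "\<And>x. eps x = 0 \<Longrightarrow> z * x = x * z" and z': "\<And>x. eps x = 0 \<Longrightarrow> z' * x = x * z'"
    and fibre: "\<And>a b. eps a = 0 \<Longrightarrow> eps b = eps z \<Longrightarrow> dennis_stein b a \<in> H"
    and a: "eps a = 0" and b: "eps b = eps z'"
  shows "dennis_stein b a \<in> H"
proof -
  have shift: "dennis_stein (w + (1 + w * a) * c) a
      = (1 + w * a) * dennis_stein c a * unit_inv (1 + w * a)"
    if "w * a = a * w" "eps c = 0" for w c
    using dennis_stein_add_left_commuting[OF that(1)] a that(2) by (simp add: one_plus_kernel_unit)
  have kernel_fibre: "dennis_stein c a \<in> H" if c: "eps c = 0" for c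
  proof -
    let ?u = "1 + z * a"
    have u: "?u \<in> ring_units" "eps ?u = 1" using a by (simp_all add: one_plus_kernel_unit)
    have "?u * dennis_stein c a * unit_inv ?u \<in> H"
      using fibre[OF a, of "z + ?u * c"] shift[OF z[OF a] c] a c by simp
    then have "unit_inv ?u * (?u * dennis_stein c a * unit_inv ?u) * unit_inv (unit_inv ?u) \<in> H"
      by (rule normal_E1_grp_conj[OF H, rotated]) (simp add: a)
    then show ?thesis using u by (simp add: mult.assoc)
  qed
  let ?u = "1 + z' * a"
  define c where "c = unit_inv ?u * (b - z')"
  have u: "?u \<in> ring_units" "eps ?u = 1" using a by (simp_all add: one_plus_kernel_unit)
  have c: "eps c = 0" using u b by (simp add: c_def)
  have "b = z' + ?u * c" using u by (simp add: c_def)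
  then have "dennis_stein b a = ?u * dennis_stein c a * unit_inv ?u"
    using shift[OF z'[OF a] c] by simp
  then show ?thesis
    using normal_E1_grp_conj[OF H u(2) kernel_fibre[OF c]] by simp
qed

abbreviation fibre_subgroup :: "'a \<Rightarrow> 'b set" where
  "fibre_subgroup \<zeta> \<equiv> dennis_stein_subgroup {(a, b). eps a = 0 \<and> eps b = \<zeta>}"

lemma fibre_subgroup_subset_E1: "fibre_subgroup \<zeta> \<subseteq> E1"
  unfolding dennis_stein_subgroup_def
  by (rule units_grp.generate_subgroup_incl[OF _ subgroup_E1]) auto

lemma fibre_subgroup_normal: "fibre_subgroup \<zeta> \<lhd> E1_grp"
proof -
  let ?X = "{dennis_stein a b | a b. (a, b) \<in> {(a, b). eps a = 0 \<and> eps b = \<zeta>}}"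
  have X_E1: "?X \<subseteq> E1" by auto
  have "generate E1_grp ?X \<lhd> E1_grp"
  proof (rule group.normal_generateI[OF group_E1_grp])
    show "?X \<subseteq> carrier E1_grp" using X_E1 by simp
    fix h g assume "h \<in> ?X" "g \<in> carrier E1_grp"
    then obtain a b where h: "h = dennis_stein a b" and ab: "eps a = 0" "eps b = \<zeta>"
      and g: "eps g = 1"
      by auto
    have "g \<otimes>\<^bsub>E1_grp\<^esub> h \<otimes>\<^bsub>E1_grp\<^esub> inv\<^bsub>E1_grp\<^esub> g
        = dennis_stein (g * a * unit_inv g) (g * b * unit_inv g)"
      using dennis_stein_conj[of g b a] eps_one_unit[OF g] one_plus_kernel_unit[of "b * a"] h ab g
      by simp
    moreover have "(g * a * unit_inv g, g * b * unit_inv g) \<in> {(a, b). eps a = 0 \<and> eps b = \<zeta>}"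
      using ab g by simp
    ultimately show "g \<otimes>\<^bsub>E1_grp\<^esub> h \<otimes>\<^bsub>E1_grp\<^esub> inv\<^bsub>E1_grp\<^esub> g \<in> ?X"
      by blast
  qed
  then show ?thesis
    unfolding dennis_stein_subgroup_def units_grp.generate_consistent[OF X_E1 subgroup_E1] .
qed

lemma dennis_stein_swap_in_fibre_subgroup:
  "eps a = 0 \<Longrightarrow> eps b = \<zeta> \<Longrightarrow> dennis_stein b a \<in> fibre_subgroup \<zeta>"
  using normal_E1_grp_unit_inv[OF fibre_subgroup_normal dennis_stein_in_subgroup[of a b]]
  by (simp add: unit_inv_dennis_stein one_plus_kernel_unit)

lemma dennis_stein_one_fibre_in_derived_E1:
  assumes a: "eps a = 0" and b: "eps b = 1"
  shows "dennis_stein b a \<in> derived units_grp E1"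
proof -
  have units: "b \<in> ring_units" "1 + b * a \<in> ring_units"
    using a b by (simp_all add: eps_one_unit one_plus_kernel_unit)
  have "dennis_stein a b \<in> derived_set units_grp E1"
    unfolding dennis_stein_eq_commutator[OF units]
    using a b by (intro UN_I[of "unit_inv b"] UN_I[of "1 + b * a"]) simp_all
  then have "dennis_stein a b \<in> derived units_grp E1"
    unfolding derived_def by (rule generate.incl)
  then have "unit_inv (dennis_stein a b) \<in> derived units_grp E1"
    by (rule normal_E1_grp_unit_inv[OF units_grp.derived_subgroup_is_normal[OF subgroup_E1]])
  then show ?thesis using units by (simp add: unit_inv_dennis_stein)
qed

context
  fixes \<zeta> :: 'a
  assumes \<zeta>: "\<And>x. eps x = 0 \<Longrightarrow> j \<zeta> * x = x * j \<zeta>"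
begin

lemma derived_E1_subset_fibre_subgroup: "derived units_grp E1 \<subseteq> fibre_subgroup \<zeta>"
proof -
  have "u * v * unit_inv u * unit_inv v \<in> fibre_subgroup \<zeta>"
    if u: "eps u = 1" and v: "eps v = 1" for u v
  proof -
    have "dennis_stein (unit_inv u) (u * (v - 1)) \<in> fibre_subgroup \<zeta>"
      by (rule dennis_stein_fibre_transfer[OF fibre_subgroup_normal, where z = "j \<zeta>" and z' = 1])
        (use \<zeta> dennis_stein_swap_in_fibre_subgroup u v in simp_all)
    then have "unit_inv (dennis_stein (unit_inv u) (u * (v - 1))) \<in> fibre_subgroup \<zeta>"
      by (rule normal_E1_grp_unit_inv[OF fibre_subgroup_normal])
    then show ?thesis
      using commutator_eq_dennis_stein[OF eps_one_unit[OF u] eps_one_unit[OF v]] u v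
      by (simp add: unit_inv_dennis_stein eps_one_unit)
  qed
  then show ?thesis
    unfolding derived_def
    by (intro units_grp.generate_subgroup_incl[OF _ subgroup_dennis_stein_subgroup])
      (auto simp: one_plus_kernel_unit)
qed

lemma fibre_subgroup_subset_derived_E1: "fibre_subgroup \<zeta> \<subseteq> derived units_grp E1"
proof -
  have "dennis_stein a b \<in> derived units_grp E1" if a: "eps a = 0" and b: "eps b = \<zeta>" for a b
  proof -
    have "dennis_stein b a \<in> derived units_grp E1"
      by (rule dennis_stein_fibre_transfer[OF units_grp.derived_subgroup_is_normal[OF subgroup_E1],
            where z = 1 and z' = "j \<zeta>"])
        (use \<zeta> dennis_stein_one_fibre_in_derived_E1 a b in simp_all)
    then have "unit_inv (dennis_stein b a) \<in> derived units_grp E1"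
      by (rule normal_E1_grp_unit_inv[OF units_grp.derived_subgroup_is_normal[OF subgroup_E1]])
    then show ?thesis
      using a by (simp add: unit_inv_dennis_stein one_plus_kernel_unit)
  qed
  then show ?thesis
    unfolding dennis_stein_subgroup_def
    by (intro units_grp.generate_subgroup_incl[OF _ units_grp.derived_is_subgroup])
      (auto intro: eps_one_unit)
qed

lemma derived_E1_eq_C_set: "derived units_grp E1 = C_set eps {(a, b). eps a = 0 \<and> eps b = \<zeta>}"
  using derived_E1_subset_fibre_subgroup fibre_subgroup_subset_derived_E1 fibre_subgroup_subset_E1
  unfolding C_set_eq_Int_dennis_stein_subgroup by blast

end

lemma derived_E1_subset_derived_units: "derived units_grp E1 \<subseteq> derived units_grp ring_units \<inter> E1"
  using units_grp.mono_derived[of E1 ring_units] units_grp.derived_incl[OF order_refl subgroup_E1]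
    eps_one_unit by blast

lemma derived_units_Int_E1_subset_N: "derived units_grp ring_units \<inter> E1 \<subseteq> N"
  using dennis_stein_subgroup_mono[of "{(a, b). b \<in> ring_units \<and> 1 + b * a \<in> ring_units}"
      "{(a, b). 1 + b * a \<in> ring_units}"] Int_E1_subset_N
  unfolding derived_units_grp by blast

lemma N_normal_E1_grp: "N \<lhd> E1_grp"
  by (rule units_grp.normal_restrict_supergroup[OF subgroup_E1 N_normal N_subset_E1])

lemma comm_group_E1_grp_Mod_N: "comm_group (E1_grp Mod N)"
proof (rule group.comm_group_Mod_if_commutators_in[OF group_E1_grp N_normal_E1_grp])
  fix x y assume "x \<in> carrier E1_grp" and "y \<in> carrier E1_grp"
  then have x: "eps x = 1" "x \<in> ring_units" and y: "eps y = 1" "y \<in> ring_units"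
    by (auto intro: eps_one_unit)
  have "dennis_stein (x * (y - 1)) (unit_inv x) \<in> N"
    using x y by (intro dennis_stein_in_N) simp
  then show "x \<otimes>\<^bsub>E1_grp\<^esub> y \<otimes>\<^bsub>E1_grp\<^esub> inv\<^bsub>E1_grp\<^esub> x \<otimes>\<^bsub>E1_grp\<^esub> inv\<^bsub>E1_grp\<^esub> y \<in> N"
    using commutator_eq_dennis_stein[OF x(2) y(2)] x y by simp
qed

end

theorem proposition3p4:
  fixes eps :: "'b::ring_1 \<Rightarrow> 'a::ring_1" and j :: "'a \<Rightarrow> 'b"
  assumes "local_augmentation eps j"
  defines "E1 \<equiv> {x. eps x = 1}"
  defines "C \<equiv> C_set eps {(a, b). eps (a * b) = 0 \<and> eps (b * a) = 0}"
  shows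
    "C_set eps {(a, b). eps a = 0} = C \<and>
     C = C_set eps {(a, b). eps (b * a) = 0} \<and>
     C_set eps {(a, b). eps (b * a) = 0} = C_set eps {(a, b). 1 + b * a \<in> carrier units_grp} \<and>
     derived units_grp (carrier units_grp) \<inter> E1 =
       C_set eps {(a, b). b \<in> carrier units_grp \<and> 1 + b * a \<in> carrier units_grp} \<and>
     (\<forall>\<zeta>. (\<forall>x. eps x = 0 \<longrightarrow> j \<zeta> * x = x * j \<zeta>) \<longrightarrow>
       derived units_grp E1 = C_set eps {(a, b). eps a = 0 \<and> eps b = \<zeta>}) \<and>
     derived units_grp E1 \<subseteq> derived units_grp (carrier units_grp) \<inter> E1 \<and>
     derived units_grp (carrier units_grp) \<inter> E1 \<subseteq> C \<and>
     C \<lhd> (units_grp\<lparr>carrier := E1\<rparr>) \<and> comm_group ((units_grp\<lparr>carrier := E1\<rparr>) Mod C)"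
proof -
  interpret local_aug eps j by unfold_locales (fact assms(1))
  have C_eq_N: "C_set eps {(a, b). eps a = 0} = N" "C = N"
    "C_set eps {(a, b). eps (b * a) = 0} = N" "C_set eps {(a, b). 1 + b * a \<in> ring_units} = N"
    unfolding C_def by (rule C_set_eq_N; auto simp: one_plus_kernel_unit)+
  show ?thesis
    using C_eq_N derived_units_grp_Int_C_set derived_E1_eq_C_set
      derived_E1_subset_derived_units derived_units_Int_E1_subset_N
      N_normal_E1_grp comm_group_E1_grp_Mod_N
    unfolding E1_def by simp
qed

end
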